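(* Let $H$ be a complex Hilbert space and let $Q \in \mathcal{L}(H)$ be an orthogonal projection. Then $Q$ satisfies the property $\mathcal{AN}^*$ if and only if the null space $\mathrm{Ker}\,Q$ is finite dimensional or the range $Q(H)$ is finite dimensional.
   Context: $\mathcal{L}(H)$ is the space of bounded linear operators on $H$. For a closed subspace $M \neq \{0\}$ of $H$ and $T \in \mathcal{L}(H)$, write $[T|_M] := \inf\{\|Tx\| : x \in M, \|x\|=1\}$; $T|_M$ satisfies $\mathcal{N}^*$ if there is $x_0 \in M$ with $\|x_0\|=1$ and $\|Tx_0\| = [T|_M]$. $T$ satisfies the property $\mathcal{AN}^*$ if $T|_M$ satisfies $\mathcal{N}^*$ for every closed subspace $M \neq \{0\}$ of $H$. *)

theory Defs
  imports "HOL-Analysis.Analysis"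
begin

text \<open>A complex Hilbert space is modelled as a real Hilbert space
  (type class real_inner + complete_space) together with a complex structure J
  (multiplication by the imaginary unit): a real-linear map with J (J x) = - x
  which preserves the real inner product (the real part of the complex one).\<close>

definition complex_structure :: "('a::real_inner \<Rightarrow> 'a) \<Rightarrow> bool" where
  "complex_structure J \<longleftrightarrow> linear J \<and> (\<forall>x. J (J x) = - x) \<and> (\<forall>x y. inner (J x) (J y) = inner x y)"

definition scaleC :: "('a::real_vector \<Rightarrow> 'a) \<Rightarrow> complex \<Rightarrow> 'a \<Rightarrow> 'a" where
  "scaleC J c x = Re c *\<^sub>R x + Im c *\<^sub>R J x"

text \<open>Complex inner product (linear in the first argument), with real part the real inner product.\<close>
definition cinner :: "('a::real_inner \<Rightarrow> 'a) \<Rightarrow> 'a \<Rightarrow> 'a \<Rightarrow> complex" where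
  "cinner J x y = Complex (inner x y) (inner x (J y))"

definition bounded_clinear :: "('a::real_normed_vector \<Rightarrow> 'a) \<Rightarrow> ('a \<Rightarrow> 'a) \<Rightarrow> bool" where
  "bounded_clinear J T \<longleftrightarrow> bounded_linear T \<and> (\<forall>x. T (J x) = J (T x))"

definition closed_csubspace :: "('a::real_normed_vector \<Rightarrow> 'a) \<Rightarrow> 'a set \<Rightarrow> bool" where
  "closed_csubspace J M \<longleftrightarrow> closed M \<and> subspace M \<and> (\<forall>x\<in>M. J x \<in> M)"

definition orth_proj :: "('a::real_inner \<Rightarrow> 'a) \<Rightarrow> ('a \<Rightarrow> 'a) \<Rightarrow> bool" where
  "orth_proj J Q \<longleftrightarrow> bounded_clinear J Q \<and> (\<forall>x. Q (Q x) = Q x)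
      \<and> (\<forall>x y. cinner J (Q x) y = cinner J x (Q y))"

definition cspan :: "('a::real_vector \<Rightarrow> 'a) \<Rightarrow> 'a set \<Rightarrow> 'a set" where
  "cspan J B = {\<Sum>b\<in>F. scaleC J (c b) b | F c. finite F \<and> F \<subseteq> B}"

definition cfinite_dim :: "('a::real_vector \<Rightarrow> 'a) \<Rightarrow> 'a set \<Rightarrow> bool" where
  "cfinite_dim J S \<longleftrightarrow> (\<exists>B. finite B \<and> B \<subseteq> S \<and> cspan J B = S)"

definition lower_bound_on :: "('a::real_normed_vector \<Rightarrow> 'a) \<Rightarrow> 'a set \<Rightarrow> real" where
  "lower_bound_on T M = Inf {norm (T x) | x. x \<in> M \<and> norm x = 1}"

definition N_star :: "('a::real_normed_vector \<Rightarrow> 'a) \<Rightarrow> 'a set \<Rightarrow> bool" where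
  "N_star T M \<longleftrightarrow> (\<exists>x0\<in>M. norm x0 = 1 \<and> norm (T x0) = lower_bound_on T M)"

definition AN_star :: "('a::real_normed_vector \<Rightarrow> 'a) \<Rightarrow> ('a \<Rightarrow> 'a) \<Rightarrow> bool" where
  "AN_star J T \<longleftrightarrow> (\<forall>M. closed_csubspace J M \<and> M \<noteq> {0} \<longrightarrow> N_star T M)"

end

theory Submission
  imports Defs
begin

text \<open>If the range of Q is finite dimensional, then on a closed subspace M either Q kills a unit
  vector, or Q is injective on M, which makes M finite dimensional and its unit sphere compact.
  If the kernel is finite dimensional, minimizing norm (Q x) over unit vectors x of M amounts,
  by Pythagoras, to maximizing norm (x - Q x), where x - Q x has finite rank; by the
  parallelogram law a maximizing sequence is Cauchy, so the maximum is attained.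
  If both are infinite dimensional, take sequences (e n) in the range and (f n) in the kernel
  that are orthonormal for the complex inner product, and a closed complex subspace M containing
  the vectors e n / (n + 1) + f n but no nonzero vector of the kernel: then the infimum of
  norm (Q x) over unit vectors of M is 0 and is not attained.\<close>

section \<open>Finite rank operators on normed spaces\<close>

lemma span_insert_coordinate_bound:
  fixes b :: "'a::real_normed_vector"
  assumes b: "b \<notin> span B" and K: "compact (span B \<inter> cball 0 (2 * norm b))"
  obtains d where "d > 0" "\<And>k x. x - k *\<^sub>R b \<in> span B \<Longrightarrow> \<bar>k\<bar> * d \<le> norm x"
proof -
  define K where "K = span B \<inter> cball 0 (2 * norm b)"
  have "-b \<notin> K" using b K_def span_neg by fastforce
  then have "infdist (-b) K > 0"
    using infdist_pos_not_in_closed[of K "-b"] K span_zero K_def compact_imp_closed by fastforce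
  moreover have "b \<noteq> 0" using b span_zero by auto
  ultimately obtain d where d: "d > 0" "d \<le> norm b" "d \<le> infdist (-b) K"
    by (intro that[of "min (norm b) (infdist (-b) K)"]) auto
  have low: "d \<le> norm (b + y)" if "y \<in> span B" for y
  proof (cases "norm y \<le> 2 * norm b")
    case True
    then have "infdist (-b) K \<le> dist (-b) y" using that K_def by (intro infdist_le) auto
    also have "dist (-b) y = norm (b + y)"
      by (simp add: dist_norm) (metis add.commute diff_minus_eq_add norm_minus_commute)
    finally show ?thesis using d(3) by linarith
  next
    case False
    have "norm y - norm b \<le> norm (b + y)"
      using norm_triangle_ineq4[of "b + y" b] by simp
    then show ?thesis using False d(2) by linarith
  qed
  show thesis
  proof (rule that[OF d(1)])
    fix k x assume k: "x - k *\<^sub>R b \<in> span B"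
    show "\<bar>k\<bar> * d \<le> norm x"
    proof (cases "k = 0")
      case False
      have "(1/k) *\<^sub>R (x - k *\<^sub>R b) \<in> span B" using k span_scale by blast
      then have "\<bar>k\<bar> * d \<le> \<bar>k\<bar> * norm (b + (1/k) *\<^sub>R (x - k *\<^sub>R b))"
        by (simp add: low mult_left_mono)
      also have "\<dots> = norm (k *\<^sub>R (b + (1/k) *\<^sub>R (x - k *\<^sub>R b)))" by simp
      also have "k *\<^sub>R (b + (1/k) *\<^sub>R (x - k *\<^sub>R b)) = x" using False by (simp add: algebra_simps)
      finally show ?thesis .
    qed simp
  qed
qed

lemma compact_span_Int_cball:
  fixes B :: "'a::real_normed_vector set"
  assumes "finite B"
  shows "compact (span B \<inter> cball 0 r)"
  using assms
proof (induction B arbitrary: r rule: finite_induct)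
  case empty
  have "span {} \<inter> cball (0::'a) r \<subseteq> {0}" by auto
  then show ?case by (meson finite.emptyI finite_imp_compact finite_insert finite_subset)
next
  case (insert b B)
  show ?case
  proof (cases "b \<in> span B")
    case True
    then show ?thesis using insert.IH by (simp add: span_redundant)
  next
    case False
    obtain d where d: "d > 0" "\<And>k x. x - k *\<^sub>R b \<in> span B \<Longrightarrow> \<bar>k\<bar> * d \<le> norm x"
      using span_insert_coordinate_bound[OF False insert.IH] by blast
    define R where "R = r + r / d * norm b"
    define f where "f = (\<lambda>p::real \<times> 'a. fst p *\<^sub>R b + snd p)"
    have eq: "span (insert b B) \<inter> cball 0 r
        = f ` ({-(r/d)..r/d} \<times> (span B \<inter> cball 0 R)) \<inter> cball 0 r"
    proof (intro equalityI subsetI)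
      fix x assume x: "x \<in> span (insert b B) \<inter> cball 0 r"
      then obtain k where k: "x - k *\<^sub>R b \<in> span B" by (auto simp: span_insert)
      have nx: "norm x \<le> r" using x by auto
      then have kr: "\<bar>k\<bar> \<le> r / d" using d k by (simp add: field_simps) (meson order_trans)
      have "norm (x - k *\<^sub>R b) \<le> norm x + \<bar>k\<bar> * norm b"
        by (metis norm_scaleR norm_triangle_ineq4)
      also have "\<dots> \<le> R" unfolding R_def using nx kr by (intro add_mono mult_right_mono) auto
      finally have "(k, x - k *\<^sub>R b) \<in> {-(r/d)..r/d} \<times> (span B \<inter> cball 0 R)" using kr k by auto
      moreover have "x = f (k, x - k *\<^sub>R b)" by (simp add: f_def)
      ultimately show "x \<in> f ` ({-(r/d)..r/d} \<times> (span B \<inter> cball 0 R)) \<inter> cball 0 r"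
        using x by blast
    next
      fix x assume "x \<in> f ` ({-(r/d)..r/d} \<times> (span B \<inter> cball 0 R)) \<inter> cball 0 r"
      then obtain k y where "y \<in> span B" "x = k *\<^sub>R b + y" "x \<in> cball 0 r" unfolding f_def by force
      then show "x \<in> span (insert b B) \<inter> cball 0 r"
        by (auto simp: span_insert intro!: exI[of _ k])
    qed
    have "continuous_on UNIV f" unfolding f_def by (intro continuous_intros)
    then have "compact (f ` ({-(r/d)..r/d} \<times> (span B \<inter> cball 0 R)))"
      using insert.IH by (intro compact_continuous_image compact_Times) (auto intro: continuous_on_subset)
    then show ?thesis unfolding eq by auto
  qed
qed

lemma subspace_obtain_unit_vector:
  fixes M :: "'a::real_normed_vector set"
  assumes "subspace M" "M \<noteq> {0}"
  obtains x where "x \<in> M" "norm x = 1"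
proof -
  obtain x where x: "x \<in> M" "x \<noteq> 0" using assms subspace_0 by blast
  show thesis
  proof
    show "inverse (norm x) *\<^sub>R x \<in> M" using assms(1) x(1) by (rule subspace_scale)
    show "norm (inverse (norm x) *\<^sub>R x) = 1" using x(2) by simp
  qed
qed

lemma N_star_if_minimizer:
  assumes "x0 \<in> M" "norm x0 = 1" "\<And>x. x \<in> M \<Longrightarrow> norm x = 1 \<Longrightarrow> norm (T x0) \<le> norm (T x)"
  shows "N_star T M"
proof -
  have "lower_bound_on T M = norm (T x0)"
    unfolding lower_bound_on_def by (rule cInf_eq_minimum) (use assms in auto)
  then show ?thesis using assms unfolding N_star_def by auto
qed

lemma not_N_star_if_inj_on_and_infimum_zero:
  assumes inj: "\<And>x. x \<in> M \<Longrightarrow> T x = 0 \<Longrightarrow> x = 0"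
    and small: "\<And>\<epsilon>. \<epsilon> > 0 \<Longrightarrow> \<exists>x\<in>M. norm x = 1 \<and> norm (T x) < \<epsilon>"
  shows "\<not> N_star T M"
proof
  assume "N_star T M"
  then obtain x0 where x0: "x0 \<in> M" "norm x0 = 1" "norm (T x0) = lower_bound_on T M"
    unfolding N_star_def by blast
  have "T x0 \<noteq> 0" using inj x0 by force
  then obtain x where x: "x \<in> M" "norm x = 1" "norm (T x) < norm (T x0)"
    using small[of "norm (T x0)"] by auto
  have "lower_bound_on T M \<le> norm (T x)"
    unfolding lower_bound_on_def using x by (intro cInf_lower bdd_belowI[of _ 0]) auto
  then show False using x x0 by simp
qed

lemma finite_span_if_finite_rank_inj_on:
  assumes T: "linear T" and B: "finite B" "T ` M \<subseteq> span B" and M: "subspace M"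
    and inj: "\<And>x. x \<in> M \<Longrightarrow> T x = 0 \<Longrightarrow> x = 0"
  obtains D where "finite D" "M \<subseteq> span D"
proof -
  obtain C where C: "C \<subseteq> T ` M" "independent C" "T ` M \<subseteq> span C" "card C = dim (T ` M)"
    by (rule basis_exists[of "T ` M"])
  have "finite C" using independent_span_bound[OF B(1) C(2)] C(1) B(2) by blast
  have "\<forall>c\<in>C. \<exists>x. x \<in> M \<and> T x = c" using C(1) by blast
  then obtain g where g: "\<And>c. c \<in> C \<Longrightarrow> g c \<in> M \<and> T (g c) = c" by metis
  have DM: "span (g ` C) \<subseteq> M" using g M by (intro span_minimal) auto
  have "M \<subseteq> span (g ` C)"
  proof
    fix x assume x: "x \<in> M"
    have "T ` g ` C = C" using g by force
    then have "T x \<in> T ` span (g ` C)" using C(3) x span_linear_image[OF T, of "g ` C"] by auto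
    then obtain y where y: "y \<in> span (g ` C)" "T y = T x" by auto
    have "x - y = 0" using DM y x M by (intro inj) (auto simp: subspace_diff linear_diff[OF T])
    then show "x \<in> span (g ` C)" using y by simp
  qed
  then show thesis using \<open>finite C\<close> by (intro that[of "g ` C"]) auto
qed

lemma finite_rank_N_star:
  fixes T :: "'a::real_normed_vector \<Rightarrow> 'a"
  assumes T: "bounded_linear T" and B: "finite B" "range T \<subseteq> span B"
    and M: "closed M" "subspace M" "M \<noteq> {0}"
  shows "N_star T M"
proof (cases "\<exists>x\<in>M. x \<noteq> 0 \<and> T x = 0")
  case True
  then obtain x where x: "x \<in> M" "x \<noteq> 0" "T x = 0" by blast
  have "inverse (norm x) *\<^sub>R x \<in> M" using M(2) x(1) by (rule subspace_scale)
  moreover have "norm (inverse (norm x) *\<^sub>R x) = 1" using x(2) by simp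
  moreover have "T (inverse (norm x) *\<^sub>R x) = 0" using x(3) T by (simp add: linear_simps)
  ultimately show ?thesis by (intro N_star_if_minimizer[of "inverse (norm x) *\<^sub>R x"]) simp_all
next
  case False
  then have inj: "\<And>x. x \<in> M \<Longrightarrow> T x = 0 \<Longrightarrow> x = 0" by blast
  have "T ` M \<subseteq> span B" using B(2) by blast
  then obtain D where D: "finite D" "M \<subseteq> span D"
    using finite_span_if_finite_rank_inj_on[OF bounded_linear.linear[OF T] B(1) _ M(2) inj] by blast
  define S where "S = M \<inter> {x. norm x = 1}"
  have "S = (span D \<inter> cball 0 1) \<inter> S" using D S_def by auto
  moreover have "closed S" unfolding S_def using M(1)
    by (intro closed_Int closed_Collect_eq continuous_intros)
  ultimately have "compact S" using compact_Int_closed[OF compact_span_Int_cball[OF D(1)]] by metis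
  moreover have "S \<noteq> {}" using subspace_obtain_unit_vector[OF M(2,3)] S_def by auto
  moreover have "continuous_on S (\<lambda>x. norm (T x))"
    by (intro continuous_on_norm linear_continuous_on T)
  ultimately obtain x0 where "x0 \<in> S" "\<forall>y\<in>S. norm (T x0) \<le> norm (T y)"
    using continuous_attains_inf by blast
  then show ?thesis by (intro N_star_if_minimizer[of x0]) (auto simp: S_def)
qed

section \<open>Maximal stretching by a finite rank operator on a Hilbert space\<close>

lemma parallelogram_law:
  fixes a b :: "'a::real_inner"
  shows "(norm (a + b))\<^sup>2 + (norm (a - b))\<^sup>2 = 2 * (norm a)\<^sup>2 + 2 * (norm b)\<^sup>2"
  by (simp add: power2_norm_eq_inner inner_add_left inner_add_right inner_diff_left
      inner_diff_right inner_commute[of b a])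

lemma norm_image_le_if_unit_bound:
  fixes P :: "'a::real_normed_vector \<Rightarrow> 'b::real_normed_vector"
  assumes P: "linear P" and M: "subspace M" and x: "x \<in> M"
    and bound: "\<And>u. u \<in> M \<Longrightarrow> norm u = 1 \<Longrightarrow> norm (P u) \<le> s"
  shows "norm (P x) \<le> s * norm x"
proof (cases "x = 0")
  case True
  then show ?thesis using linear_0[OF P] by simp
next
  case False
  have "norm (P (inverse (norm x) *\<^sub>R x)) \<le> s"
    using False by (intro bound subspace_scale[OF M x]) simp
  then show ?thesis using False by (simp add: linear_scale[OF P] field_simps)
qed

lemma Cauchy_if_norm_image_maximizing:
  fixes P :: "'a::real_inner \<Rightarrow> 'b::real_normed_vector"
  assumes P: "linear P" and M: "subspace M" and s: "s > 0"
    and bound: "\<And>x. x \<in> M \<Longrightarrow> norm (P x) \<le> s * norm x"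
    and y: "\<And>n. y n \<in> M" "\<And>n. norm (y n) = 1"
    and lim: "(\<lambda>n. P (y n)) \<longlonglongrightarrow> z" and z: "norm z = s"
  shows "Cauchy y"
  unfolding Cauchy_def
proof (intro allI impI)
  fix e :: real assume e: "e > 0"
  define d where "d = e\<^sup>2 * s / 8"
  have "d > 0" unfolding d_def using e s by simp
  then obtain N where N: "\<And>n. n \<ge> N \<Longrightarrow> norm (P (y n) - z) < d"
    using LIMSEQ_D[OF lim] by blast
  have "dist (y m) (y n) < e" if mn: "m \<ge> N" "n \<ge> N" for m n
  proof -
    \<comment> \<open>the midpoint w of y m and y n nearly attains the maximal stretching s, so its norm is
      nearly 1, and the parallelogram law forces y m and y n to be close\<close>
    define w where "w = (1/2) *\<^sub>R (y m + y n)"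
    have "2 *\<^sub>R (P w - z) = (P (y m) - z) + (P (y n) - z)"
      unfolding w_def linear_scale[OF P] linear_add[OF P] by (simp add: algebra_simps scaleR_2)
    then have "2 * norm (P w - z) \<le> norm (P (y m) - z) + norm (P (y n) - z)"
      by (metis norm_scaleR norm_triangle_ineq abs_numeral)
    also have "\<dots> < 2 * d" using N[OF mn(1)] N[OF mn(2)] by simp
    finally have "s - d < norm (P w)"
      using norm_triangle_ineq2[of z "P w"] z by (simp add: norm_minus_commute)
    also have "norm (P w) \<le> s * norm w"
      unfolding w_def using M y by (intro bound subspace_scale subspace_add)
    finally have "s * (1 - e\<^sup>2 / 8) < s * norm w" unfolding d_def by (simp add: algebra_simps)
    then have w: "1 - e\<^sup>2 / 8 < norm w" using s by (simp add: mult_less_cancel_left_pos)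
    have "(norm (y m - y n))\<^sup>2 = 4 - 4 * (norm w)\<^sup>2"
      using parallelogram_law[of "y m" "y n"] y(2)[of m] y(2)[of n]
      by (simp add: w_def power_divide)
    also have "\<dots> \<le> 8 * (1 - norm w)"
      using zero_le_power2[of "norm w - 1"] by (simp add: power2_eq_square algebra_simps)
    also have "\<dots> < e\<^sup>2" using w by simp
    finally have "norm (y m - y n) < e" by (rule power_less_imp_less_base) (use e in simp)
    then show ?thesis by (simp add: dist_norm)
  qed
  then show "\<exists>N. \<forall>m\<ge>N. \<forall>n\<ge>N. dist (y m) (y n) < e" by blast
qed

lemma obtain_sequence_tendsto_Sup:
  fixes g :: "'a \<Rightarrow> real"
  assumes "S \<noteq> {}" "bdd_above (g ` S)"
  obtains x where "\<And>n. x n \<in> S" "(\<lambda>n. g (x n)) \<longlonglongrightarrow> Sup (g ` S)"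
proof -
  have "Sup (g ` S) \<in> closure (g ` S)" using assms by (intro closure_contains_Sup) auto
  then obtain a where a: "\<And>n. a n \<in> g ` S" "a \<longlonglongrightarrow> Sup (g ` S)"
    unfolding closure_sequential by blast
  have "\<exists>y. y \<in> S \<and> g y = a n" for n using a(1)[of n] by auto
  then obtain x where x: "\<And>n. x n \<in> S \<and> g (x n) = a n" by metis
  show thesis
  proof
    show "x n \<in> S" for n using x by blast
    show "(\<lambda>n. g (x n)) \<longlonglongrightarrow> Sup (g ` S)" using a(2) x by simp
  qed
qed

lemma finite_rank_attains_max_norm:
  fixes P :: "'a::{real_inner,complete_space} \<Rightarrow> 'b::real_normed_vector"
  assumes P: "bounded_linear P" and B: "finite B" "range P \<subseteq> span B"
    and M: "closed M" "subspace M" "M \<noteq> {0}"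
  obtains x0 where "x0 \<in> M" "norm x0 = 1" "\<And>x. x \<in> M \<Longrightarrow> norm x = 1 \<Longrightarrow> norm (P x) \<le> norm (P x0)"
proof -
  obtain K where "\<And>x. norm (P x) \<le> norm x * K" using bounded_linear.bounded[OF P] by blast
  then have K: "norm (P x) \<le> K" if "norm x = 1" for x using that by (metis mult_1)
  define S where "S = M \<inter> {x. norm x = 1}"
  define s where "s = Sup ((\<lambda>x. norm (P x)) ` S)"
  obtain u where u: "u \<in> M" "norm u = 1" using subspace_obtain_unit_vector[OF M(2,3)] .
  then have "S \<noteq> {}" by (auto simp: S_def)
  moreover have bdd: "bdd_above ((\<lambda>x. norm (P x)) ` S)"
    using K by (intro bdd_aboveI[of _ K]) (auto simp: S_def)
  ultimately have up: "norm (P x) \<le> s" if "x \<in> M" "norm x = 1" for x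
    unfolding s_def using that by (intro cSup_upper) (auto simp: S_def)
  show thesis
  proof (cases "s > 0")
    case False
    show thesis
    proof (rule that[OF u])
      show "norm (P x) \<le> norm (P u)" if "x \<in> M" "norm x = 1" for x
        using up[OF that] False norm_ge_zero[of "P u"] by linarith
    qed
  next
    case True
    obtain x where x: "\<And>n. x n \<in> S" and xs: "(\<lambda>n. norm (P (x n))) \<longlonglongrightarrow> s"
      using obtain_sequence_tendsto_Sup[OF \<open>S \<noteq> {}\<close> bdd] unfolding s_def by blast
    have "P (x n) \<in> span B \<inter> cball 0 K" for n using B(2) K x by (auto simp: S_def)
    then obtain z r where r: "strict_mono r" and z: "((\<lambda>n. P (x n)) \<circ> r) \<longlonglongrightarrow> z"
      using compact_imp_seq_compact[OF compact_span_Int_cball[OF B(1)]] by (metis seq_compactE)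
    define y where "y = x \<circ> r"
    have y: "y n \<in> M" "norm (y n) = 1" for n using x by (auto simp: y_def S_def)
    have Py: "(\<lambda>n. P (y n)) \<longlonglongrightarrow> z" using z by (simp add: y_def o_def)
    have "(\<lambda>n. norm (P (y n))) \<longlonglongrightarrow> s"
      using LIMSEQ_subseq_LIMSEQ[OF xs r] by (simp add: y_def o_def)
    then have "norm z = s" using tendsto_norm[OF Py] LIMSEQ_unique by blast
    have "Cauchy y"
      using bounded_linear.linear[OF P] M(2) True
        norm_image_le_if_unit_bound[OF bounded_linear.linear[OF P] M(2) _ up] y Py \<open>norm z = s\<close>
      by (rule Cauchy_if_norm_image_maximizing)
    then obtain x0 where x0: "y \<longlonglongrightarrow> x0" using Cauchy_convergent_iff convergent_def by blast
    show thesis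
    proof
      show "x0 \<in> M" by (rule closed_sequentially[OF M(1) _ x0]) (simp add: y)
      have "(\<lambda>n. 1) \<longlonglongrightarrow> norm x0" using tendsto_norm[OF x0] y(2) by simp
      then show "norm x0 = 1" using LIMSEQ_const_iff by metis
      have "P x0 = z" using bounded_linear.tendsto[OF P x0] Py LIMSEQ_unique by blast
      then show "norm (P x) \<le> norm (P x0)" if "x \<in> M" "norm x = 1" for x
        using up[OF that] \<open>norm z = s\<close> by simp
    qed
  qed
qed

section \<open>Complex structures and orthogonal projections\<close>

lemma cfinite_dim_obtain_span:
  assumes "cfinite_dim J S"
  obtains B where "finite B" "S \<subseteq> span B"
proof -
  obtain B where B: "finite B" "cspan J B = S" using assms unfolding cfinite_dim_def by blast
  have "S \<subseteq> span (B \<union> J ` B)"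
  proof
    fix x assume "x \<in> S"
    then obtain F c where x: "x = (\<Sum>b\<in>F. scaleC J (c b) b)" "F \<subseteq> B"
      using B(2) unfolding cspan_def by blast
    have "scaleC J (c b) b \<in> span (B \<union> J ` B)" if "b \<in> F" for b
      unfolding scaleC_def using that x(2) by (intro span_add span_scale span_base) auto
    then show "x \<in> span (B \<union> J ` B)" unfolding x(1) by (rule span_sum)
  qed
  then show thesis using B(1) by (intro that[of "B \<union> J ` B"]) auto
qed

definition J_orthonormal :: "('a::real_inner \<Rightarrow> 'a) \<Rightarrow> (nat \<Rightarrow> 'a) \<Rightarrow> bool" where
  "J_orthonormal J e \<longleftrightarrow>
     (\<forall>n m. inner (e n) (e m) = (if n = m then 1 else 0) \<and> inner (e n) (J (e m)) = 0)"

locale complex_hilbert =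
  fixes J :: "'a::{real_inner,complete_space} \<Rightarrow> 'a"
  assumes complex_structure: "complex_structure J"
begin

sublocale J: linear J
  using complex_structure by (simp add: complex_structure_def)

lemma J_J [simp]: "J (J x) = - x"
  using complex_structure by (simp add: complex_structure_def)

lemma inner_J_J [simp]: "inner (J x) (J y) = inner x y"
  using complex_structure by (simp add: complex_structure_def)

lemma inner_J_left: "inner (J x) y = - inner x (J y)"
  using inner_J_J[of "J x" y] by simp

lemma inner_J_self [simp]: "inner x (J x) = 0"
  using inner_J_left[of x x] by (simp add: inner_commute)

lemma mem_orthogonal_comp_J_iff:
  "x \<in> (W \<union> J ` W)\<^sup>\<bottom> \<longleftrightarrow> (\<forall>w\<in>W. inner x w = 0 \<and> inner x (J w) = 0)"
  by (auto simp: orthogonal_comp_def orthogonal_def inner_commute)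

lemma closed_csubspace_orthogonal_comp: "closed_csubspace J ((W \<union> J ` W)\<^sup>\<bottom>)"
proof -
  have "(W \<union> J ` W)\<^sup>\<bottom> = (\<Inter>w\<in>W \<union> J ` W. {x. inner w x = 0})"
    by (auto simp: orthogonal_comp_def orthogonal_def)
  then have "closed ((W \<union> J ` W)\<^sup>\<bottom>)"
    by (simp add: closed_INT closed_Collect_eq continuous_on_inner continuous_on_const continuous_on_id)
  moreover have "J x \<in> (W \<union> J ` W)\<^sup>\<bottom>" if "x \<in> (W \<union> J ` W)\<^sup>\<bottom>" for x
    using that by (simp add: mem_orthogonal_comp_J_iff inner_J_left)
  ultimately show ?thesis
    by (simp add: closed_csubspace_def subspace_orthogonal_comp)
qed

lemma J_orthogonal_unit_exists:
  assumes S: "subspace S" and JS: "\<And>x. x \<in> S \<Longrightarrow> J x \<in> S" and nf: "\<not> cfinite_dim J S"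
    and F: "finite F" "F \<subseteq> S"
    and orth: "\<And>a b. a \<in> F \<Longrightarrow> b \<in> F \<Longrightarrow> inner a b = (if a = b then 1 else 0)"
    and J_orth: "\<And>a b. a \<in> F \<Longrightarrow> b \<in> F \<Longrightarrow> inner a (J b) = 0"
  obtains v where "v \<in> S" "norm v = 1" "\<And>b. b \<in> F \<Longrightarrow> inner v b = 0 \<and> inner v (J b) = 0"
proof -
  have "cspan J F \<subseteq> S"
  proof
    fix x assume "x \<in> cspan J F"
    then obtain G c where x: "x = (\<Sum>b\<in>G. scaleC J (c b) b)" "G \<subseteq> F" unfolding cspan_def by blast
    show "x \<in> S" unfolding x(1) scaleC_def
      using x(2) F(2) by (intro subspace_sum[OF S] subspace_add[OF S] subspace_scale[OF S] JS) auto
  qed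
  moreover have "cspan J F \<noteq> S" using nf F unfolding cfinite_dim_def by blast
  ultimately obtain y where y: "y \<in> S" "y \<notin> cspan J F" by blast
  \<comment> \<open>subtract from y its orthogonal projection p onto the complex span of F\<close>
  define p where "p = (\<Sum>b\<in>F. inner y b *\<^sub>R b + inner y (J b) *\<^sub>R J b)"
  have "p = (\<Sum>b\<in>F. scaleC J (Complex (inner y b) (inner y (J b))) b)"
    unfolding p_def scaleC_def by simp
  then have p: "p \<in> cspan J F" unfolding cspan_def mem_Collect_eq using F(1)
    by (intro exI[of _ F] exI[of _ "\<lambda>b. Complex (inner y b) (inner y (J b))"]) simp
  have "inner p c = inner y c \<and> inner p (J c) = inner y (J c)" if c: "c \<in> F" for c
  proof -
    have "inner p c = (\<Sum>b\<in>F. if b = c then inner y c else 0)"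
      unfolding p_def inner_sum_left
      using orth[OF _ c] J_orth[OF _ c] by (intro sum.cong) (auto simp: inner_add_left inner_J_left)
    moreover have "inner p (J c) = (\<Sum>b\<in>F. if b = c then inner y (J c) else 0)"
      unfolding p_def inner_sum_left
      using orth[OF _ c] J_orth[OF _ c] by (intro sum.cong) (auto simp: inner_add_left)
    ultimately show ?thesis using c F(1) by simp
  qed
  moreover have "y - p \<noteq> 0" using y(2) p by auto
  moreover have "y - p \<in> S" using S y(1) p \<open>cspan J F \<subseteq> S\<close> by (intro subspace_diff) auto
  ultimately show thesis
    by (intro that[of "inverse (norm (y - p)) *\<^sub>R (y - p)"]) (auto simp: subspace_scale[OF S] inner_diff_left)
qed

lemma J_orthonormal_on_if_triangular:
  fixes e :: "nat \<Rightarrow> 'a"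
  assumes "\<And>i. i \<in> I \<Longrightarrow> norm (e i) = 1"
    and "\<And>i j. i \<in> I \<Longrightarrow> j \<in> I \<Longrightarrow> j < i \<Longrightarrow> inner (e i) (e j) = 0 \<and> inner (e i) (J (e j)) = 0"
    and "i \<in> I" "j \<in> I"
  shows "inner (e i) (e j) = (if i = j then 1 else 0) \<and> inner (e i) (J (e j)) = 0"
proof (cases i j rule: linorder_cases)
  case less
  then have "inner (e j) (e i) = 0 \<and> inner (e j) (J (e i)) = 0" using assms(2-4) by blast
  then show ?thesis using less inner_J_left[of "e j" "e i"] by (simp add: inner_commute)
next
  case equal
  then show ?thesis using assms(1,3) by (simp add: power2_norm_eq_inner[symmetric])
next
  case greater
  then show ?thesis using assms(2-4) by auto
qed

lemma J_orthonormal_sequence_exists: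
  assumes S: "subspace S" and JS: "\<And>x. x \<in> S \<Longrightarrow> J x \<in> S" and nf: "\<not> cfinite_dim J S"
  obtains e where "range e \<subseteq> S" "J_orthonormal J e"
proof -
  define good where "good (e :: nat \<Rightarrow> 'a) n v \<longleftrightarrow>
      v \<in> S \<and> norm v = 1 \<and> (\<forall>m<n. inner v (e m) = 0 \<and> inner v (J (e m)) = 0)" for e n v
  have "\<exists>e. \<forall>n. good e n (e n)"
  proof (rule dependent_wellorder_choice)
    fix n e assume prev: "\<And>m. m < n \<Longrightarrow> good e m (e m)"
    have on: "inner (e i) (e j) = (if i = j then 1 else 0) \<and> inner (e i) (J (e j)) = 0"
      if "i < n" "j < n" for i j
      using prev that by (intro J_orthonormal_on_if_triangular[of "{..<n}"]) (auto simp: good_def)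
    have F_on: "inner a b = (if a = b then 1 else 0) \<and> inner a (J b) = 0"
      if ab: "a \<in> e ` {..<n}" "b \<in> e ` {..<n}" for a b
    proof -
      obtain i j where "i < n" "j < n" "a = e i" "b = e j" using ab by auto
      then show ?thesis using on[of i j] on[of i i] by (cases "i = j") auto
    qed
    have "e ` {..<n} \<subseteq> S" using prev by (auto simp: good_def)
    then obtain v where "v \<in> S" "norm v = 1" "\<And>b. b \<in> e ` {..<n} \<Longrightarrow> inner v b = 0 \<and> inner v (J b) = 0"
      using J_orthogonal_unit_exists[OF S JS nf finite_imageI[OF finite_lessThan] _
          conjunct1[OF F_on] conjunct2[OF F_on]] by blast
    then show "\<exists>v. good e n v" unfolding good_def by blast
  qed (simp add: good_def)
  then obtain e where e: "\<And>n. good e n (e n)" by blast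
  have "J_orthonormal J e"
    unfolding J_orthonormal_def using e by (intro allI J_orthonormal_on_if_triangular[of UNIV]) (auto simp: good_def)
  then show thesis using e by (intro that) (auto simp: good_def)
qed

end

locale orthogonal_projection = complex_hilbert +
  fixes Q :: "'a::{real_inner,complete_space} \<Rightarrow> 'a"
  assumes orth_proj: "orth_proj J Q"
begin

sublocale Q: bounded_linear Q
  using orth_proj by (simp add: orth_proj_def bounded_clinear_def)

lemma Q_J: "Q (J x) = J (Q x)"
  using orth_proj by (simp add: orth_proj_def bounded_clinear_def)

lemma Q_idem [simp]: "Q (Q x) = Q x"
  using orth_proj by (simp add: orth_proj_def)

lemma inner_Q_left: "inner (Q x) y = inner x (Q y)"
proof -
  have "cinner J (Q x) y = cinner J x (Q y)" using orth_proj unfolding orth_proj_def by blast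
  then show ?thesis unfolding cinner_def by simp
qed

lemma inner_range_kernel: "Q a = a \<Longrightarrow> Q b = 0 \<Longrightarrow> inner a b = 0"
  by (metis inner_Q_left inner_zero_right)

lemma norm_Q_squared: "(norm (Q x))\<^sup>2 = (norm x)\<^sup>2 - (norm (x - Q x))\<^sup>2"
proof -
  have "orthogonal (Q x) (x - Q x)"
    unfolding orthogonal_def by (rule inner_range_kernel) (simp_all add: Q.diff)
  then have "(norm (Q x + (x - Q x)))\<^sup>2 = (norm (Q x))\<^sup>2 + (norm (x - Q x))\<^sup>2"
    by (rule norm_add_Pythagorean)
  then show ?thesis by simp
qed

lemma N_star_if_finite_dim_kernel:
  assumes "cfinite_dim J {x. Q x = 0}" and M: "closed_csubspace J M" "M \<noteq> {0}"
  shows "N_star Q M"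
proof -
  obtain B where "finite B" "{x. Q x = 0} \<subseteq> span B" using assms(1) by (rule cfinite_dim_obtain_span)
  moreover have "range (\<lambda>x. x - Q x) \<subseteq> {x. Q x = 0}" by (auto simp: Q.diff)
  moreover have "bounded_linear (\<lambda>x. x - Q x)" by (intro bounded_linear_sub bounded_linear_ident Q.bounded_linear)
  ultimately obtain x0 where x0: "x0 \<in> M" "norm x0 = 1"
      and max: "\<And>x. x \<in> M \<Longrightarrow> norm x = 1 \<Longrightarrow> norm (x - Q x) \<le> norm (x0 - Q x0)"
    using M by (elim finite_rank_attains_max_norm) (auto simp: closed_csubspace_def)
  show ?thesis
  proof (rule N_star_if_minimizer[OF x0])
    fix x assume x: "x \<in> M" "norm x = 1"
    have "(norm (x - Q x))\<^sup>2 \<le> (norm (x0 - Q x0))\<^sup>2" using max[OF x] by (simp add: power_mono)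
    then have "(norm (Q x0))\<^sup>2 \<le> (norm (Q x))\<^sup>2" using x x0 by (simp add: norm_Q_squared)
    then show "norm (Q x0) \<le> norm (Q x)" by (rule power2_le_imp_le) simp
  qed
qed

end

section \<open>A closed complex subspace on which the infimum is not attained\<close>

locale projection_orthonormal_pair = orthogonal_projection +
  fixes e f :: "nat \<Rightarrow> 'a::{real_inner,complete_space}"
  assumes e_range: "\<And>n. Q (e n) = e n" and e_orthonormal: "J_orthonormal J e"
    and f_kernel: "\<And>n. Q (f n) = 0" and f_orthonormal: "J_orthonormal J f"
begin

lemma inner_e_f [simp]:
  "inner (e n) (f m) = 0" "inner (e n) (J (f m)) = 0"
  "inner (f n) (e m) = 0" "inner (f n) (J (e m)) = 0"
  using inner_range_kernel[OF e_range f_kernel] inner_range_kernel[OF e_range, of "J (f m)"]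
    inner_range_kernel[OF _ f_kernel, of "J (e m)"]
  by (auto simp: Q_J e_range f_kernel inner_commute)

lemma inner_e_e [simp]: "inner (e n) (e m) = (if n = m then 1 else 0)" "inner (e n) (J (e m)) = 0"
  using e_orthonormal by (simp_all add: J_orthonormal_def)

lemma inner_f_f [simp]: "inner (f n) (f m) = (if n = m then 1 else 0)" "inner (f n) (J (f m)) = 0"
  using f_orthonormal by (simp_all add: J_orthonormal_def)

definition kernel_rest :: "'a set" where
  "kernel_rest = {z. Q z = 0 \<and> (\<forall>n. inner z (f n) = 0 \<and> inner z (J (f n)) = 0)}"

text \<open>Writing the subspace as an orthogonal complement avoids taking closures of spans;
  orthogonality to kernel_rest removes the part of the kernel that the f n do not reach.\<close>

definition tilting_set :: "'a set" where
  "tilting_set = range (\<lambda>n. inverse (real (Suc n)) *\<^sub>R f n - e n) \<union> kernel_rest"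

definition tilted_subspace :: "'a set" where
  "tilted_subspace = (tilting_set \<union> J ` tilting_set)\<^sup>\<bottom>"

lemma mem_tilted_subspace_iff:
  "x \<in> tilted_subspace \<longleftrightarrow>
    (\<forall>n. inverse (real (Suc n)) * inner x (f n) = inner x (e n)
       \<and> inverse (real (Suc n)) * inner x (J (f n)) = inner x (J (e n)))
    \<and> (\<forall>z\<in>kernel_rest. inner x z = 0 \<and> inner x (J z) = 0)"
proof -
  define g where "g n = inverse (real (Suc n)) *\<^sub>R f n - e n" for n
  have "(\<forall>w\<in>tilting_set. inner x w = 0 \<and> inner x (J w) = 0) \<longleftrightarrow>
      (\<forall>n. inner x (g n) = 0 \<and> inner x (J (g n)) = 0)
      \<and> (\<forall>z\<in>kernel_rest. inner x z = 0 \<and> inner x (J z) = 0)"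
    unfolding tilting_set_def g_def by blast
  then show ?thesis
    by (simp add: tilted_subspace_def mem_orthogonal_comp_J_iff g_def inner_diff_right J.diff J.scaleR)
qed

lemma tilted_vector_mem: "inverse (real (Suc k)) *\<^sub>R e k + f k \<in> tilted_subspace"
proof -
  have "inner (e k) z = 0 \<and> inner (e k) (J z) = 0 \<and> inner (f k) z = 0 \<and> inner (f k) (J z) = 0"
    if "z \<in> kernel_rest" for z
    using that inner_range_kernel[OF e_range, of z] inner_range_kernel[OF e_range, of "J z"]
      inner_J_left[of z "f k"]
    by (auto simp: kernel_rest_def Q_J inner_commute)
  then show ?thesis unfolding mem_tilted_subspace_iff by (auto simp: inner_add_left)
qed

lemma norm_tilted_vector_ge: "1 \<le> norm (inverse (real (Suc n)) *\<^sub>R e n + f n)"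
proof -
  have "(norm (inverse (real (Suc n)) *\<^sub>R e n + f n))\<^sup>2
      = (norm (inverse (real (Suc n)) *\<^sub>R e n))\<^sup>2 + (norm (f n))\<^sup>2"
    by (rule norm_add_Pythagorean) (simp add: orthogonal_def)
  moreover have "norm (f n) = 1" by (simp add: norm_eq_sqrt_inner)
  ultimately have "1\<^sup>2 \<le> (norm (inverse (real (Suc n)) *\<^sub>R e n + f n))\<^sup>2" by simp
  then show ?thesis by (rule power2_le_imp_le) simp
qed

lemma tilted_subspace_inj:
  assumes x: "x \<in> tilted_subspace" and Qx: "Q x = 0"
  shows "x = 0"
proof -
  have "inner x (e n) = 0 \<and> inner x (J (e n)) = 0" for n
    using inner_range_kernel[OF e_range Qx] inner_range_kernel[of "J (e n)" x] Qx
    by (simp add: Q_J e_range inner_commute)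
  then have "x \<in> kernel_rest" using x Qx unfolding mem_tilted_subspace_iff kernel_rest_def by auto
  then have "inner x x = 0" using x unfolding mem_tilted_subspace_iff by blast
  then show ?thesis by simp
qed

lemma closed_csubspace_tilted_subspace: "closed_csubspace J tilted_subspace"
  unfolding tilted_subspace_def by (rule closed_csubspace_orthogonal_comp)

lemma tilted_subspace_not_N_star: "\<not> N_star Q tilted_subspace"
proof (rule not_N_star_if_inj_on_and_infimum_zero[OF tilted_subspace_inj])
  fix \<epsilon> :: real assume "\<epsilon> > 0"
  then obtain n where n: "inverse (real (Suc n)) < \<epsilon>" using reals_Archimedean by blast
  define u where "u = inverse (real (Suc n)) *\<^sub>R e n + f n"
  have u: "u \<in> tilted_subspace" "1 \<le> norm u" unfolding u_def by (rule tilted_vector_mem norm_tilted_vector_ge)+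
  have "norm (e n) = 1" using inner_e_e(1)[of n n] by (simp add: norm_eq_sqrt_inner)
  then have "norm (Q u) = inverse (real (Suc n))" by (simp add: u_def Q.add Q.scaleR e_range f_kernel)
  then have "norm (Q (inverse (norm u) *\<^sub>R u)) = inverse (norm u) * inverse (real (Suc n))"
    by (simp add: Q.scaleR)
  also have "\<dots> \<le> inverse (real (Suc n))"
    using u(2) by (intro mult_left_le_one_le) (auto simp: inverse_le_1_iff)
  finally have "norm (Q (inverse (norm u) *\<^sub>R u)) \<le> inverse (real (Suc n))" .
  moreover have "inverse (norm u) *\<^sub>R u \<in> tilted_subspace"
    using closed_csubspace_tilted_subspace u(1) by (simp add: closed_csubspace_def subspace_scale)
  moreover have "norm (inverse (norm u) *\<^sub>R u) = 1"
    using u(2) by (simp del: norm_eq_zero add: field_simps)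
  ultimately show "\<exists>x\<in>tilted_subspace. norm x = 1 \<and> norm (Q x) < \<epsilon>" using n by force
qed

end

lemma (in orthogonal_projection) not_AN_star_if_infinite_dim:
  assumes "\<not> cfinite_dim J {x. Q x = 0}" "\<not> cfinite_dim J (range Q)"
  shows "\<not> AN_star J Q"
proof -
  obtain e where e: "range e \<subseteq> range Q" "J_orthonormal J e"
    using assms(2) by (rule J_orthonormal_sequence_exists[rotated 2])
      (auto simp: linear_subspace_image[OF Q.linear subspace_UNIV] simp flip: Q_J)
  obtain f where f: "range f \<subseteq> {x. Q x = 0}" "J_orthonormal J f"
    using assms(1) by (rule J_orthonormal_sequence_exists[rotated 2])
      (auto simp: linear_subspace_kernel[OF Q.linear] Q_J)
  have "Q (e n) = e n" for n
    using e(1) Q_idem by (metis range_subsetD rangeE)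
  interpret projection_orthonormal_pair J Q e f
    using e f \<open>\<And>n. Q (e n) = e n\<close> by unfold_locales auto
  have "tilted_subspace \<noteq> {0}" using tilted_vector_mem[of 0] norm_tilted_vector_ge[of 0] by force
  then show ?thesis
    unfolding AN_star_def using closed_csubspace_tilted_subspace tilted_subspace_not_N_star by blast
qed

theorem theorem3p10:
  fixes J Q :: "'a::{real_inner, complete_space} \<Rightarrow> 'a"
  assumes "complex_structure J"
    and "orth_proj J Q"
  shows "AN_star J Q \<longleftrightarrow> cfinite_dim J {x. Q x = 0} \<or> cfinite_dim J (range Q)"
proof -
  interpret orthogonal_projection J Q by unfold_locales (fact assms)+
  have "N_star Q M"
    if fin: "cfinite_dim J {x. Q x = 0} \<or> cfinite_dim J (range Q)"
      and M: "closed_csubspace J M" "M \<noteq> {0}" for M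
    using fin
  proof
    assume "cfinite_dim J {x. Q x = 0}"
    then show ?thesis using M by (rule N_star_if_finite_dim_kernel)
  next
    assume "cfinite_dim J (range Q)"
    then obtain B where "finite B" "range Q \<subseteq> span B" by (rule cfinite_dim_obtain_span)
    then show ?thesis
      using M by (intro finite_rank_N_star Q.bounded_linear) (auto simp: closed_csubspace_def)
  qed
  then show ?thesis
    using not_AN_star_if_infinite_dim unfolding AN_star_def by blast
qed

end
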